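(* Let $G$ be a graph, $r$ a positive integer, and $P\subset V(G)$. Suppose $P$ has a partition $\{P_0,P_1,\dots,P_k\}$ with $\mathcal{D}_G(P_i,3)=\emptyset$ for each $i$ with $0\le i\le k$. Let $d\colon P\to[r+1]$ be a precoloring of $P$ in $G$, and suppose $G$ has an $r$-coloring $f$ with $f(v)=d(v)$ for each $v\in P_0$. Then for each $t$ with $0\le t\le k$, there exists an $(r+t)$-coloring $f_t$ of $G$ with $f_t(v)=d(v)$ for each $v\in\bigcup_{i=0}^t P_i$. In particular, $f_k$ is an $(r+k)$-coloring of $G$ with $f_k(v)=d(v)$ for each $v\in P$.
   Context: For a graph $G$, $Q\subset V(G)$ and a positive integer $k$, $\mathcal{D}_G(Q,k)=\{\{x,y\}\subset Q: x\ne y,\ d_G(x,y)\le k\}$, where $d_G$ is the distance in $G$. $[m]=\{1,\dots,m\}$. A precoloring of $P$ in $G$ is a proper coloring of $G[P]$. An $m$-coloring of $G$ is a proper coloring of $G$ using at most $m$ colors. *)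

theory Defs
  imports Main "HOL-Library.Extended_Nat"
begin

definition graph :: "'a set \<Rightarrow> ('a \<Rightarrow> 'a \<Rightarrow> bool) \<Rightarrow> bool" where
  "graph V E \<longleftrightarrow> finite V \<and> (\<forall>x y. E x y \<longrightarrow> x \<in> V \<and> y \<in> V)
     \<and> (\<forall>x y. E x y \<longrightarrow> E y x) \<and> (\<forall>x. \<not> E x x)"

definition is_walk :: "'a set \<Rightarrow> ('a \<Rightarrow> 'a \<Rightarrow> bool) \<Rightarrow> 'a list \<Rightarrow> bool" where
  "is_walk V E xs \<longleftrightarrow> xs \<noteq> [] \<and> set xs \<subseteq> V
     \<and> (\<forall>i. Suc i < length xs \<longrightarrow> E (xs ! i) (xs ! Suc i))"

text \<open>Distance in G (infinite if no path exists).\<close>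
definition gdist :: "'a set \<Rightarrow> ('a \<Rightarrow> 'a \<Rightarrow> bool) \<Rightarrow> 'a \<Rightarrow> 'a \<Rightarrow> enat" where
  "gdist V E x y = Inf {enat (length xs - 1) | xs. is_walk V E xs \<and> hd xs = x \<and> last xs = y}"

definition close_pairs :: "'a set \<Rightarrow> ('a \<Rightarrow> 'a \<Rightarrow> bool) \<Rightarrow> 'a set \<Rightarrow> nat \<Rightarrow> 'a set set" where
  "close_pairs V E Q k = {{x, y} | x y. x \<in> Q \<and> y \<in> Q \<and> x \<noteq> y \<and> gdist V E x y \<le> enat k}"

definition proper_col_on :: "('a \<Rightarrow> 'a \<Rightarrow> bool) \<Rightarrow> 'a set \<Rightarrow> nat \<Rightarrow> ('a \<Rightarrow> nat) \<Rightarrow> bool" where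
  "proper_col_on E S m c \<longleftrightarrow> (\<forall>v\<in>S. c v \<in> {1..m})
     \<and> (\<forall>x\<in>S. \<forall>y\<in>S. E x y \<longrightarrow> c x \<noteq> c y)"

abbreviation m_coloring :: "'a set \<Rightarrow> ('a \<Rightarrow> 'a \<Rightarrow> bool) \<Rightarrow> nat \<Rightarrow> ('a \<Rightarrow> nat) \<Rightarrow> bool" where
  "m_coloring V E m c \<equiv> proper_col_on E V m c"

end

theory Submission
  imports Defs
begin

text \<open>Given an (r+t)-colouring f that agrees with d on the first parts,
  let Q be the next part: give every vertex of Q its prescribed colour, and move every
  neighbour x of some v \<in> Q with f x = d v to the new colour r+t+1. Since the vertices of Q
  are pairwise at distance at least 4, each vertex has at most one neighbour in Q and two
  adjacent recoloured vertices would have the same witness in Q, hence equal old colours;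
  so the result is proper. Vertices of earlier parts are never recoloured because d is
  proper on P.\<close>

lemma is_walk_singleton [simp]: "is_walk V E [x] \<longleftrightarrow> x \<in> V"
  unfolding is_walk_def by simp

lemma is_walk_Cons_Cons [simp]:
  "is_walk V E (x # y # xs) \<longleftrightarrow> x \<in> V \<and> E x y \<and> is_walk V E (y # xs)"
  unfolding is_walk_def by (auto simp: less_Suc_eq_0_disj)

lemma gdist_le_walk_length:
  assumes "is_walk V E xs" "hd xs = x" "last xs = y"
  shows "gdist V E x y \<le> enat (length xs - 1)"
  unfolding gdist_def using assms by (intro Inf_lower) blast

lemma far_set_short_walk_ends_eq:
  assumes "close_pairs V E Q k = {}" "v \<in> Q" "w \<in> Q"
    and "is_walk V E xs" "hd xs = v" "last xs = w" "length xs - 1 \<le> k"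
  shows "v = w"
proof (rule ccontr)
  assume "v \<noteq> w"
  have "gdist V E v w \<le> enat k"
    using gdist_le_walk_length[OF assms(4-6)] assms(7) by (simp add: order_trans)
  then have "{v, w} \<in> close_pairs V E Q k"
    using assms(2,3) \<open>v \<noteq> w\<close> unfolding close_pairs_def by blast
  with assms(1) show False by simp
qed

lemma far_set_no_edge:
  assumes "graph V E" "close_pairs V E Q k = {}" "1 \<le> k" "v \<in> Q" "w \<in> Q"
  shows "\<not> E v w"
proof
  assume vw: "E v w"
  with assms(1) have walk: "is_walk V E [v, w]" unfolding graph_def by simp
  have "v = w" by (rule far_set_short_walk_ends_eq[OF assms(2,4,5) walk]) (use assms(3) in simp_all)
  with vw assms(1) show False unfolding graph_def by blast
qed

lemma far_set_common_neighbour_eq: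
  assumes "graph V E" "close_pairs V E Q k = {}" "2 \<le> k" "v \<in> Q" "w \<in> Q"
    and "E v x" "E x w"
  shows "v = w"
proof -
  from assms(1,6,7) have walk: "is_walk V E [v, x, w]" unfolding graph_def by simp
  show ?thesis by (rule far_set_short_walk_ends_eq[OF assms(2,4,5) walk]) (use assms(3) in simp_all)
qed

lemma far_set_adjacent_neighbours_eq:
  assumes "graph V E" "close_pairs V E Q k = {}" "3 \<le> k" "v \<in> Q" "w \<in> Q"
    and "E v x" "E x y" "E y w"
  shows "v = w"
proof -
  from assms(1,6-8) have walk: "is_walk V E [v, x, y, w]" unfolding graph_def by simp
  show ?thesis by (rule far_set_short_walk_ends_eq[OF assms(2,4,5) walk]) (use assms(3) in simp_all)
qed

lemma extend_coloring_to_far_set: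
  assumes G: "graph V E"
    and f: "m_coloring V E m f"
    and far: "close_pairs V E Q 3 = {}"
    and dQ: "\<forall>v\<in>Q. d v \<in> {1..m + 1}"
  obtains g where "m_coloring V E (m + 1) g" "\<forall>v\<in>Q. g v = d v"
    "\<And>x. x \<notin> Q \<Longrightarrow> (\<And>v. v \<in> Q \<Longrightarrow> E v x \<Longrightarrow> f x \<noteq> d v) \<Longrightarrow> g x = f x"
proof -
  have sym: "\<And>x y. E x y \<Longrightarrow> E y x" and inV: "\<And>x y. E x y \<Longrightarrow> x \<in> V \<and> y \<in> V"
    using G unfolding graph_def by auto
  have fV: "\<And>x. x \<in> V \<Longrightarrow> f x \<in> {1..m}"
    and fE: "\<And>x y. x \<in> V \<Longrightarrow> y \<in> V \<Longrightarrow> E x y \<Longrightarrow> f x \<noteq> f y"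
    using f unfolding proper_col_on_def by auto
  define recol where "recol x \<longleftrightarrow> x \<notin> Q \<and> (\<exists>v\<in>Q. E v x \<and> f x = d v)" for x
  define g where "g x = (if x \<in> Q then d x else if recol x then m + 1 else f x)" for x
  have recol_indep: "\<not> E x y" if "recol x" "recol y" "x \<in> V" "y \<in> V" for x y
  proof
    assume xy: "E x y"
    from that obtain v w where v: "v \<in> Q" "E v x" "f x = d v" and w: "w \<in> Q" "E w y" "f y = d w"
      unfolding recol_def by blast
    have "v = w"
      using far_set_adjacent_neighbours_eq[OF G far _ v(1) w(1) v(2) xy sym[OF w(2)]] by simp
    with v w fE[OF that(3,4) xy] show False by simp
  qed
  have Q_other: "g x \<noteq> g y" if "x \<in> Q" "y \<notin> Q" "E x y" for x y
  proof (cases "recol y")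
    case True
    then obtain v where "v \<in> Q" "E v y" "f y = d v" unfolding recol_def by blast
    then have "v = x"
      using far_set_common_neighbour_eq[OF G far _ _ that(1)] sym[OF that(3)] by simp
    moreover have "f y \<le> m" using fV inV[OF that(3)] by auto
    ultimately show ?thesis using \<open>f y = d v\<close> that True unfolding g_def by simp
  next
    case False
    then show ?thesis using that unfolding g_def recol_def by auto
  qed
  have "m_coloring V E (m + 1) g"
    unfolding proper_col_on_def
  proof (intro conjI ballI impI)
    show "g x \<in> {1..m + 1}" if "x \<in> V" for x
      using dQ fV[OF that] unfolding g_def by auto
    show "g x \<noteq> g y" if "x \<in> V" "y \<in> V" "E x y" for x y
    proof (cases "x \<in> Q \<or> y \<in> Q")
      case True
      then show ?thesis
        using far_set_no_edge[OF G far] Q_other[of x y] Q_other[of y x] sym that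
        by (metis one_le_numeral)
    next
      case False
      then show ?thesis
        using recol_indep[OF _ _ that(1,2)] fE[OF that] fV[OF that(1)] fV[OF that(2)] that(3)
        unfolding g_def by (auto split: if_splits)
    qed
  qed
  moreover have "\<forall>v\<in>Q. g v = d v" unfolding g_def by simp
  moreover have "g x = f x" if "x \<notin> Q" "\<And>v. v \<in> Q \<Longrightarrow> E v x \<Longrightarrow> f x \<noteq> d v" for x
    using that unfolding g_def recol_def by auto
  ultimately show ?thesis using that by blast
qed

lemma extend_precoloring_step:
  assumes G: "graph V E"
    and f: "m_coloring V E m f"
    and far: "close_pairs V E Q 3 = {}"
    and d: "proper_col_on E P n d" and n: "n \<le> m + 1"
    and AQ: "A \<subseteq> P" "Q \<subseteq> P" "A \<inter> Q = {}"
    and fd: "\<forall>v\<in>A. f v = d v"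
  shows "\<exists>g. m_coloring V E (m + 1) g \<and> (\<forall>v\<in>A \<union> Q. g v = d v)"
proof -
  have "\<forall>v\<in>Q. d v \<in> {1..m + 1}" using d n AQ unfolding proper_col_on_def by fastforce
  then obtain g where g: "m_coloring V E (m + 1) g" "\<forall>v\<in>Q. g v = d v"
    and keep: "\<And>x. x \<notin> Q \<Longrightarrow> (\<And>v. v \<in> Q \<Longrightarrow> E v x \<Longrightarrow> f x \<noteq> d v) \<Longrightarrow> g x = f x"
    using extend_coloring_to_far_set[OF G f far] by blast
  have "g x = d x" if "x \<in> A" for x
  proof -
    have no_clash: "f x \<noteq> d v" if "v \<in> Q" "E v x" for v
    proof -
      have "v \<in> P" "x \<in> P" using AQ \<open>x \<in> A\<close> that(1) by auto
      then have "d v \<noteq> d x" using d that(2) unfolding proper_col_on_def by blast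
      then show ?thesis using fd \<open>x \<in> A\<close> by simp
    qed
    have "x \<notin> Q" using AQ(3) that by blast
    from keep[OF this no_clash] show ?thesis using fd that by simp
  qed
  with g show ?thesis by blast
qed

theorem lemma4:
  fixes V :: "'a set" and E :: "'a \<Rightarrow> 'a \<Rightarrow> bool"
    and P :: "'a set" and Ps :: "nat \<Rightarrow> 'a set" and k r :: nat
    and d f :: "'a \<Rightarrow> nat"
  assumes G: "graph V E"
    and r: "r \<ge> 1"
    and PV: "P \<subseteq> V"
    and part_union: "(\<Union>i\<in>{0..k}. Ps i) = P"
    and part_nonempty: "\<forall>i\<in>{0..k}. Ps i \<noteq> {}"
    and part_disj: "\<forall>i\<in>{0..k}. \<forall>j\<in>{0..k}. i \<noteq> j \<longrightarrow> Ps i \<inter> Ps j = {}"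
    and far: "\<forall>i\<in>{0..k}. close_pairs V E (Ps i) 3 = {}"
    and d: "proper_col_on E P (r + 1) d"
    and f: "m_coloring V E r f"
    and fd: "\<forall>v\<in>Ps 0. f v = d v"
  shows "\<forall>t\<in>{0..k}. \<exists>ft. m_coloring V E (r + t) ft \<and>
           (\<forall>v\<in>(\<Union>i\<in>{0..t}. Ps i). ft v = d v)"
proof -
  have "\<exists>ft. m_coloring V E (r + t) ft \<and> (\<forall>v\<in>(\<Union>i\<in>{0..t}. Ps i). ft v = d v)"
    if "t \<le> k" for t
    using that
  proof (induction t)
    case 0
    then show ?case using f fd by auto
  next
    case (Suc t)
    then obtain ft where ft: "m_coloring V E (r + t) ft"
      and ftd: "\<forall>v\<in>(\<Union>i\<in>{0..t}. Ps i). ft v = d v" by auto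
    have "Ps i \<inter> Ps (Suc t) = {}" if "i \<le> t" for i
      using part_disj Suc.prems that by simp
    then have disj: "(\<Union>i\<in>{0..t}. Ps i) \<inter> Ps (Suc t) = {}" by (simp add: Int_UN_distrib Int_commute)
    have sub: "(\<Union>i\<in>{0..t}. Ps i) \<subseteq> P" "Ps (Suc t) \<subseteq> P"
      using part_union Suc.prems by auto
    have "close_pairs V E (Ps (Suc t)) 3 = {}" using far Suc.prems by simp
    from extend_precoloring_step[OF G ft this d _ sub disj ftd]
    obtain g where "m_coloring V E (r + Suc t) g"
      and "\<forall>v\<in>(\<Union>i\<in>{0..t}. Ps i) \<union> Ps (Suc t). g v = d v" by auto
    moreover have "(\<Union>i\<in>{0..Suc t}. Ps i) = (\<Union>i\<in>{0..t}. Ps i) \<union> Ps (Suc t)"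
      by (simp add: atLeast0_atMost_Suc Un_commute)
    ultimately show ?case by auto
  qed
  then show ?thesis by auto
qed

end
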